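(* Let $(K,v)$ be a valued field such that $K$ is not algebraically closed. Then there is a polynomial $F(X,Y)\in K[X,Y]$ such that the set $\{v(F(a,b)) : a,b\in K\}\subseteq\Gamma\cup\{\infty\}$ has no maximal element. In particular, for $K=\mathbb{R}((t))$ with the $t$-adic valuation, $F(X,Y)=X^2+(XY-1)^2$ is such a polynomial.
   Context: $\Gamma$ denotes the value group of $v$, and $v(0)=\infty>\Gamma$. *)

theory Defs
  imports "HOL-Computational_Algebra.Polynomial" "HOL-Computational_Algebra.Formal_Laurent_Series"
begin

text \<open>Extended value group: None plays the role of infinity, above every value.\<close>
fun val_le :: "'g::linorder option \<Rightarrow> 'g option \<Rightarrow> bool" where
  "val_le _ None = True"
| "val_le None (Some _) = False"
| "val_le (Some a) (Some b) = (a \<le> b)"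

fun val_add :: "'g::ordered_ab_group_add option \<Rightarrow> 'g option \<Rightarrow> 'g option" where
  "val_add (Some a) (Some b) = Some (a + b)"
| "val_add _ _ = None"

definition valuation :: "('a::field \<Rightarrow> 'g::linordered_ab_group_add option) \<Rightarrow> bool" where
  "valuation v \<longleftrightarrow>
     (\<forall>x. v x = None \<longleftrightarrow> x = 0) \<and>
     (\<forall>x y. v (x * y) = val_add (v x) (v y)) \<and>
     (\<forall>x y. val_le (v x) (v (x + y)) \<or> val_le (v y) (v (x + y)))"

definition nontrivial_valuation :: "('a::field \<Rightarrow> 'g::linordered_ab_group_add option) \<Rightarrow> bool" where
  "nontrivial_valuation v \<longleftrightarrow> (\<exists>x. x \<noteq> 0 \<and> v x \<noteq> Some 0)"

definition alg_closed :: "'a::field itself \<Rightarrow> bool" where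
  "alg_closed _ \<longleftrightarrow> (\<forall>p :: 'a poly. degree p > 0 \<longrightarrow> (\<exists>x. poly p x = 0))"

text \<open>Bivariate polynomials K[X,Y] represented as (K[X])[Y]; evaluation at (a,b).\<close>
definition eval2 :: "'a::comm_semiring_0 poly poly \<Rightarrow> 'a \<Rightarrow> 'a \<Rightarrow> 'a" where
  "eval2 F a b = poly (map_poly (\<lambda>c. poly c a) F) b"

definition has_max_val :: "'g::linorder option set \<Rightarrow> bool" where
  "has_max_val S \<longleftrightarrow> (\<exists>m\<in>S. \<forall>s\<in>S. val_le s m)"

definition t_adic :: "real fls \<Rightarrow> int option" where
  "t_adic f = (if f = 0 then None else Some (fls_subdegree f))"

text \<open>X^2 + (XY - 1)^2 as an element of (K[X])[Y]:  (X^2+1) - 2X Y + X^2 Y^2.\<close>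
definition F_example :: "'a::comm_ring_1 poly poly" where
  "F_example = [: [:1, 0, 1:], [:0, -2:], [:0, 0, 1:] :]"

end

theory Submission
  imports Defs
begin

(* Let p in K[X] have degree d > 0 and no root in K, and let
   P(X,Z) = Z^d p(X/Z) = sum_i c_i X^i Z^(d-i) be its homogenisation.  Put
   F_p(X,Y) = P(X, XY - 1).  Then F_p never vanishes on K^2: for ab <> 1 the
   value is (ab-1)^d p(a/(ab-1)) <> 0, and for ab = 1 it is c_d a^d with a <> 0.
   Hence every value v(F_p(a,b)) lies in Gamma, while along the curve b = 1/a
   we get v(F_p(a,1/a)) = v(c_d) + v(a^d), which exceeds any prescribed value
   once v(a) is large -- possible because a nontrivial valuation has elements of
   positive value.  So the set of values has no maximum. *)

text \<open>The part of the valuation axioms the argument uses: v is a monoid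
  homomorphism from the multiplicative monoid of K into the extended group,
  with v x = \<infinity> exactly for x = 0.\<close>
definition multiplicative_val :: "('a::field \<Rightarrow> 'g::linordered_ab_group_add option) \<Rightarrow> bool" where
  "multiplicative_val v \<longleftrightarrow>
     (\<forall>x. v x = None \<longleftrightarrow> x = 0) \<and> (\<forall>x y. v (x * y) = val_add (v x) (v y))"

lemma valuation_multiplicative: "valuation v \<Longrightarrow> multiplicative_val v"
  unfolding valuation_def multiplicative_val_def by auto

lemma multiplicative_valD:
  assumes "multiplicative_val v"
  shows "v x = None \<longleftrightarrow> x = 0" and "v (x * y) = val_add (v x) (v y)"
  using assms unfolding multiplicative_val_def by auto

lemma val_finite:
  assumes "multiplicative_val v" and "x \<noteq> 0"
  shows "\<exists>g. v x = Some g"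
  using multiplicative_valD(1)[OF assms(1), of x] assms(2) by (cases "v x") auto

lemma val_mult_Some:
  assumes "multiplicative_val v" and "v x = Some g" and "v y = Some h"
  shows "v (x * y) = Some (g + h)"
  using multiplicative_valD(2)[OF assms(1)] assms(2,3) by simp

lemma val_one:
  assumes "multiplicative_val v"
  shows "v 1 = Some 0"
proof -
  obtain g where g: "v 1 = Some g" using val_finite[OF assms, of 1] by auto
  have "v (1 * 1) = Some (g + g)" using val_mult_Some[OF assms g g] .
  with g have "g + g = g" by simp
  with g show ?thesis by simp
qed

text \<open>A nontrivial valuation takes a positive value: if v x < 0 then
  v (1/x) = - v x > 0.\<close>
lemma nontrivial_has_positive_value:
  assumes "multiplicative_val v" and "nontrivial_valuation v"
  obtains s e where "v s = Some e" and "e > 0"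
proof -
  obtain x where x0: "x \<noteq> 0" and vx: "v x \<noteq> Some 0"
    using assms(2) unfolding nontrivial_valuation_def by auto
  obtain g where g: "v x = Some g" using val_finite[OF assms(1) x0] by blast
  obtain h where h: "v (inverse x) = Some h" using val_finite[OF assms(1), of "inverse x"] x0 by auto
  have "Some (g + h) = Some 0"
    using val_mult_Some[OF assms(1) g h] val_one[OF assms(1)] x0 by simp
  hence "h = - g" by (simp add: add_eq_0_iff)
  moreover have "g \<noteq> 0" using vx g by auto
  ultimately show ?thesis using that g h by (cases "g > 0") auto
qed

lemma exists_value_above:
  assumes "multiplicative_val v" and "v s = Some e" and "e > 0" and "v w = Some h"
  obtains a ea where "v a = Some ea" and "ea > 0" and "ea > h"
proof (cases "h \<ge> 0")
  case True
  have "v (w * s) = Some (h + e)" using val_mult_Some[OF assms(1) assms(4,2)] .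
  moreover have "h + e > 0" and "h + e > h" using True \<open>e > 0\<close> by (auto simp: add_nonneg_pos)
  ultimately show ?thesis using that by blast
next
  case False
  thus ?thesis using that[OF assms(2,3)] \<open>e > 0\<close> by auto
qed

lemma val_power_ge:
  assumes mv: "multiplicative_val v" and va: "v a = Some e" and "e \<ge> 0" and "n \<ge> 1"
  shows "\<exists>f. v (a ^ n) = Some f \<and> e \<le> f"
proof -
  obtain m where n: "n = Suc m" using \<open>n \<ge> 1\<close> by (cases n) auto
  have "\<exists>f. v (a ^ Suc m) = Some f \<and> e \<le> f"
  proof (induction m)
    case 0
    show ?case using va by simp
  next
    case (Suc m)
    then obtain f where f: "v (a ^ Suc m) = Some f" and "e \<le> f" by blast
    have "v (a ^ Suc (Suc m)) = Some (e + f)"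
      using val_mult_Some[OF mv va f] by simp
    moreover have "e \<le> e + f" by (rule add_increasing[OF \<open>e \<ge> 0\<close> \<open>e \<le> f\<close>])
    ultimately show ?case by blast
  qed
  thus ?thesis using n by simp
qed

lemma monomial_values_unbounded:
  assumes mv: "multiplicative_val v" and vs: "v s = Some e" and "e > 0"
    and "c \<noteq> 0" and "d > 0" and "y \<noteq> 0"
  obtains a where "a \<noteq> 0" and "\<not> val_le (v (c * a ^ d)) (v y)"
proof -
  obtain l where l: "v c = Some l" using val_finite[OF mv \<open>c \<noteq> 0\<close>] by blast
  obtain h where h: "v (y / c) = Some h"
    using val_finite[OF mv, of "y / c"] \<open>c \<noteq> 0\<close> \<open>y \<noteq> 0\<close> by auto
  have vy: "v y = Some (l + h)"
    using val_mult_Some[OF mv l h] \<open>c \<noteq> 0\<close> by simp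
  obtain a ea where va: "v a = Some ea" and "ea > 0" and "ea > h"
    using exists_value_above[OF mv vs \<open>e > 0\<close> h] .
  have "ea \<ge> 0" and "d \<ge> 1" using \<open>ea > 0\<close> \<open>d > 0\<close> by simp_all
  then obtain f where f: "v (a ^ d) = Some f" and "f \<ge> ea"
    using val_power_ge[OF mv va] by blast
  have "v (c * a ^ d) = Some (l + f)" using val_mult_Some[OF mv l f] .
  moreover have "l + h < l + f" using \<open>ea > h\<close> \<open>f \<ge> ea\<close> by simp
  moreover have "a \<noteq> 0" using va multiplicative_valD(1)[OF mv, of a] by auto
  ultimately show ?thesis using that vy by simp
qed

definition homog :: "'a::comm_ring_1 poly \<Rightarrow> 'a \<Rightarrow> 'a \<Rightarrow> 'a" where
  "homog p x z = (\<Sum>i\<le>degree p. coeff p i * x ^ i * z ^ (degree p - i))"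

lemma homog_nonzero_z:
  fixes x z :: "'a::field"
  assumes "z \<noteq> 0"
  shows "homog p x z = z ^ degree p * poly p (x / z)"
proof -
  have "z ^ degree p * poly p (x / z) = (\<Sum>i\<le>degree p. z ^ degree p * (coeff p i * (x / z) ^ i))"
    by (simp add: poly_altdef sum_distrib_left)
  also have "\<dots> = homog p x z"
    unfolding homog_def
  proof (rule sum.cong)
    fix i assume "i \<in> {..degree p}"
    hence "z ^ degree p = z ^ i * z ^ (degree p - i)" by (simp flip: power_add)
    thus "z ^ degree p * (coeff p i * (x / z) ^ i) = coeff p i * x ^ i * z ^ (degree p - i)"
      using assms by (simp add: power_divide field_simps)
  qed simp
  finally show ?thesis by simp
qed

lemma homog_zero_z: "homog p x 0 = lead_coeff p * x ^ degree p"
proof -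
  have "homog p x 0 = (\<Sum>i\<le>degree p. if i = degree p then coeff p i * x ^ i else 0)"
    unfolding homog_def by (rule sum.cong) (auto simp: power_0_left)
  thus ?thesis by simp
qed

lemma homog_nonvanishing:
  fixes x z :: "'a::field"
  assumes "p \<noteq> 0" and "\<forall>t. poly p t \<noteq> 0" and "x \<noteq> 0 \<or> z \<noteq> 0"
  shows "homog p x z \<noteq> 0"
  using assms by (cases "z = 0") (simp_all add: homog_zero_z homog_nonzero_z)

text \<open>F_p(X,Y) = P(X, XY - 1) as an element of K[X][Y].\<close>
definition homog_XY :: "'a::comm_ring_1 poly \<Rightarrow> 'a poly poly" where
  "homog_XY p = (\<Sum>i\<le>degree p. [:[:coeff p i:]:] * [:[:0, 1:]:] ^ i
                    * ([:[:0, 1:]:] * [:0, 1:] - 1) ^ (degree p - i))"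

lemma eval2_as_poly: "eval2 F a b = poly (poly F [:b:]) a"
  unfolding eval2_def by (induct F rule: pCons_induct) (auto simp: map_poly_pCons)

lemma eval2_homog_XY: "eval2 (homog_XY p) a b = homog p a (a * b - 1)"
  by (simp add: eval2_as_poly homog_XY_def homog_def poly_sum mult.assoc)

lemma eval2_homog_XY_nonzero:
  fixes a b :: "'a::field"
  assumes "p \<noteq> 0" and "\<forall>t. poly p t \<noteq> 0"
  shows "eval2 (homog_XY p) a b \<noteq> 0"
proof -
  have "a \<noteq> 0 \<or> a * b - 1 \<noteq> 0" by auto
  thus ?thesis using homog_nonvanishing[OF assms] by (simp add: eval2_homog_XY)
qed

lemma eval2_homog_XY_hyperbola:
  fixes a :: "'a::field"
  assumes "a \<noteq> 0"
  shows "eval2 (homog_XY p) a (inverse a) = lead_coeff p * a ^ degree p"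
  using assms by (simp add: eval2_homog_XY homog_zero_z)

text \<open>For a rootless p of positive degree, the values of F_p have no maximum:
  each value v(F_p(a0,b0)) is finite and is exceeded along the hyperbola.\<close>
theorem homog_XY_values_no_max:
  fixes v :: "'a::field \<Rightarrow> 'g::linordered_ab_group_add option"
  assumes mv: "multiplicative_val v" and vs: "v s = Some e" and "e > 0"
    and "degree p > 0" and rootless: "\<forall>t. poly p t \<noteq> 0"
  shows "\<not> has_max_val {v (eval2 (homog_XY p) a b) | a b. True}"
proof
  have "p \<noteq> 0" using \<open>degree p > 0\<close> by auto
  assume "has_max_val {v (eval2 (homog_XY p) a b) | a b. True}"
  then obtain a0 b0 where max: "\<And>a b. val_le (v (eval2 (homog_XY p) a b)) (v (eval2 (homog_XY p) a0 b0))"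
    unfolding has_max_val_def by blast
  have "lead_coeff p \<noteq> 0" using \<open>p \<noteq> 0\<close> by simp
  then obtain a where "a \<noteq> 0" and above: "\<not> val_le (v (lead_coeff p * a ^ degree p)) (v (eval2 (homog_XY p) a0 b0))"
    using monomial_values_unbounded[OF mv vs \<open>e > 0\<close> _ \<open>degree p > 0\<close>
          eval2_homog_XY_nonzero[OF \<open>p \<noteq> 0\<close> rootless]] by blast
  thus False using above max[of a "inverse a"] by (simp add: eval2_homog_XY_hyperbola)
qed

text \<open>-1 is not a square in R((t)): the square of the lowest coefficient would be -1.\<close>
lemma fls_square_neq_minus_one: "(x :: real fls) * x \<noteq> -1"
proof
  assume xx: "x * x = -1"
  hence "x \<noteq> 0" by auto
  have "fls_subdegree (x * x) = 0" using xx by simp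
  hence sd: "fls_subdegree x = 0" using \<open>x \<noteq> 0\<close> by simp
  have "fls_nth (x * x) (fls_subdegree x + fls_subdegree x) = fls_nth x 0 * fls_nth x 0"
    by (rule trans[OF fls_times_base]) (simp add: sd)
  hence "fls_nth x 0 * fls_nth x 0 = -1" using xx sd by simp
  moreover have "fls_nth x 0 * fls_nth x 0 \<ge> 0" by simp
  ultimately show False by linarith
qed

lemma t_adic_multiplicative: "multiplicative_val t_adic"
  unfolding multiplicative_val_def by (simp add: t_adic_def)

lemma X2_plus_1_rootless: "\<forall>x :: real fls. poly [:1, 0, 1:] x \<noteq> 0"
proof
  fix x :: "real fls"
  have "1 + x * x \<noteq> 0" using fls_square_neq_minus_one[of x] by (metis add.commute add_eq_0_iff)
  thus "poly [:1, 0, 1:] x \<noteq> 0" by (simp add: algebra_simps)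
qed

lemma eval2_F_example: "eval2 F_example a b = eval2 (homog_XY [:1, 0, 1:]) a (b :: 'a::comm_ring_1)"
proof -
  have "degree [:1, 0, 1 :: 'a:] = 2" and "coeff [:1, 0, 1 :: 'a:] 2 = 1"
    by (simp_all add: numeral_2_eq_2)
  moreover have "{..2::nat} = {0, 1, 2}" by auto
  ultimately have "eval2 (homog_XY [:1, 0, 1:]) a b = a * a + (a * b - 1) * (a * b - 1)"
    by (simp only: eval2_homog_XY homog_def) (simp add: power2_eq_square)
  moreover have "eval2 F_example a b = a * a + (a * b - 1) * (a * b - 1)"
    by (simp add: eval2_as_poly F_example_def) (simp add: algebra_simps)
  ultimately show ?thesis by simp
qed

theorem mainTheorem4:
  fixes v :: "'a::field \<Rightarrow> 'g::linordered_ab_group_add option"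
  assumes "valuation v"
    and "nontrivial_valuation v"
    and "\<not> alg_closed TYPE('a)"
  shows "(\<exists>F :: 'a poly poly. \<not> has_max_val {v (eval2 F a b) | a b. True})
       \<and> \<not> has_max_val {t_adic (eval2 F_example a b) | a b. True}"
proof
  have mv: "multiplicative_val v" using valuation_multiplicative[OF assms(1)] .
  obtain p :: "'a poly" where "degree p > 0" and "\<forall>t. poly p t \<noteq> 0"
    using assms(3) unfolding alg_closed_def by auto
  moreover obtain s e where "v s = Some e" and "e > 0"
    using nontrivial_has_positive_value[OF mv assms(2)] .
  ultimately show "\<exists>F :: 'a poly poly. \<not> has_max_val {v (eval2 F a b) | a b. True}"
    using homog_XY_values_no_max[OF mv] by blast
next
  have "t_adic fls_X = Some 1" by (simp add: t_adic_def)
  from homog_XY_values_no_max[OF t_adic_multiplicative this _ _ X2_plus_1_rootless]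
  show "\<not> has_max_val {t_adic (eval2 F_example a b) | a b. True}"
    by (simp add: eval2_F_example)
qed

end
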